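(* Let $g$ be a locally Lipschitz function on $\mathbb{R}$ and suppose there is a separately convex function $h$ on $\mathbb{R}^2$ such that $g(t)=h(t,t)$ for every $t\in\mathbb{R}$. Then for every bounded interval $I\subset\mathbb{R}$ there is a constant $C^*(g,I)$ such that $$-\int_0^1\frac{\omega^*_g(x,t)}{t^2}\,dt<C^*(g,I)$$ for every $x\in I$.
   Context: A function $h:\mathbb{R}^2\to\mathbb{R}$ is called separately convex if it is convex on every line parallel to a coordinate axis. For a real function $g$ on $\mathbb{R}$, $\omega_g(x,t):=g(x+t)+g(x-t)-2g(x)$, and for $t\ge0$, $\omega^*_g(x,\cdot)$ is defined as the greatest non-increasing minorant of $\omega_g(x,\cdot)$ on $[0,\infty)$. *)

theory Defs
  imports "HOL-Analysis.Analysis"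
begin

definition separately_convex :: "(real \<times> real \<Rightarrow> real) \<Rightarrow> bool" where
  "separately_convex h \<longleftrightarrow>
     (\<forall>y. convex_on UNIV (\<lambda>x. h (x, y))) \<and> (\<forall>x. convex_on UNIV (\<lambda>y. h (x, y)))"

definition locally_lipschitz :: "(real \<Rightarrow> real) \<Rightarrow> bool" where
  "locally_lipschitz g \<longleftrightarrow>
     (\<forall>x. \<exists>U L. open U \<and> x \<in> U \<and> L-lipschitz_on U g)"

definition omega :: "(real \<Rightarrow> real) \<Rightarrow> real \<Rightarrow> real \<Rightarrow> real" where
  "omega g x t = g (x + t) + g (x - t) - 2 * g x"

text \<open>Greatest non-increasing minorant of omega g x on [0, infinity), taken pointwise as the
  supremum of the values of all non-increasing minorants (for t >= 0).\<close>
definition omega_star :: "(real \<Rightarrow> real) \<Rightarrow> real \<Rightarrow> real \<Rightarrow> real" where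
  "omega_star g x t = Sup {\<phi> t | \<phi>. antimono_on {0..} \<phi> \<and> (\<forall>s\<ge>0. \<phi> s \<le> omega g x s)}"

end

theory Submission
  imports Defs
begin

(* Fix x and write D(r) = omega g x r and N(r) = h(x+r, x-r) + h(x-r, x+r) - 2 g(x). Convexity of h
   along the horizontal and vertical lines through the points (x +- r, x -+ r) gives -D(r) <= N(r),
   an upper bound N(r) <= D(r) + O(r) from the boundedness of h near the diagonal, and
     -D(r) / (3 r) <= N(rho) / rho - N(r) / r   whenever 2 r <= rho and D(r), D(rho) <= 0.
   So N(r)/r is bounded on (0, 1] and grows by at least -D(r)/(3r) across every halving of r.
   Let s_k minimise D on [0, 2^-k] and a_k = -D(s_k). Then -omega*_g(x, t) <= a_k on
   [2^-(k+1), 2^-k), so the integral is at most the sum of 2^(k+1) a_k. Cutting the indices into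
   blocks on which s_k has not yet halved, the first block contributes at most 4 a_0 / s_0 <= 8 L,
   and every later block is paid for by the growth of N(r)/r. All constants only depend on a
   Lipschitz constant of g and a bound for h near the diagonal over I. *)

lemma convex_on_three_point:
  fixes f :: "real \<Rightarrow> real"
  assumes "convex_on S f" "a \<in> S" "c \<in> S" "a \<le> b" "b \<le> c"
  shows "(c - a) * f b \<le> (c - b) * f a + (b - a) * f c"
proof (cases "a = c")
  case False
  define t where "t = (b - a) / (c - a)"
  have "a < c" using assms False by simp
  then have t: "0 \<le> t" "t \<le> 1" "t * (c - a) = b - a" using assms by (auto simp: t_def field_simps)
  then have "b = (1 - t) *\<^sub>R a + t *\<^sub>R c" by (simp add: algebra_simps)
  then have "f b \<le> (1 - t) * f a + t * f c"
    using convex_onD[OF assms(1) t(1,2) assms(2,3)] by simp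
  then have "(c - a) * f b \<le> (c - a) * ((1 - t) * f a + t * f c)"
    using \<open>a < c\<close> by (intro mult_left_mono) auto
  also have "\<dots> = ((c - a) - t * (c - a)) * f a + (t * (c - a)) * f c"
    by (simp add: algebra_simps)
  also have "\<dots> = (c - b) * f a + (b - a) * f c"
    using t(3) by simp
  finally show ?thesis .
qed (use assms in auto)

lemma convex_on_midpoint:
  fixes f :: "real \<Rightarrow> real"
  assumes "convex_on UNIV f"
  shows "2 * f x \<le> f (x - r) + f (x + r)"
proof -
  have "f ((1 - 1/2) *\<^sub>R (x - r) + (1/2) *\<^sub>R (x + r)) \<le> (1 - 1/2) * f (x - r) + (1/2) * f (x + r)"
    by (rule convex_onD[OF assms]) auto
  moreover have "(1 - 1/2) *\<^sub>R (x - r) + (1/2) *\<^sub>R (x + r) = x" by (simp add: field_simps)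
  ultimately show ?thesis by simp
qed

lemma omega_abs_le_lipschitz:
  assumes "L-lipschitz_on S g" "x - r \<in> S" "x \<in> S" "x + r \<in> S"
  shows "\<bar>omega g x r\<bar> \<le> 2 * L * \<bar>r\<bar>"
proof -
  have "\<bar>g (x + r) - g x\<bar> \<le> L * \<bar>r\<bar>" "\<bar>g (x - r) - g x\<bar> \<le> L * \<bar>r\<bar>"
    using lipschitz_onD[OF assms(1), of "x + r" x] lipschitz_onD[OF assms(1), of "x - r" x] assms(2-4)
    by (simp_all add: dist_real_def)
  then show ?thesis by (simp add: omega_def)
qed

lemma omega_le_omega_star:
  assumes "continuous_on UNIV g" "0 \<le> t" "t \<le> u" "s \<in> {0..u}"
    and min: "\<And>y. y \<in> {0..u} \<Longrightarrow> omega g x s \<le> omega g x y"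
  shows "omega g x s \<le> omega_star g x t"
proof -
  define running_min where "running_min t = Inf (omega g x ` {0..t})" for t
  have "continuous_on UNIV (omega g x)"
    unfolding omega_def
    by (intro continuous_intros continuous_on_compose2[OF assms(1)] subset_UNIV)
  then have bdd: "bdd_below (omega g x ` {0..t})" for t
    by (meson bounded_imp_bdd_below compact_Icc compact_continuous_image compact_imp_bounded
        continuous_on_subset subset_UNIV)
  have "antimono_on {0..} running_min"
    unfolding running_min_def by (intro monotone_onI cInf_superset_mono bdd) auto
  moreover have "\<forall>s\<ge>0. running_min s \<le> omega g x s"
    unfolding running_min_def using bdd by (auto intro: cInf_lower)
  ultimately have "running_min t \<in> {\<phi> t |\<phi>. antimono_on {0..} \<phi> \<and> (\<forall>s\<ge>0. \<phi> s \<le> omega g x s)}"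
    by blast
  moreover have "bdd_above {\<phi> t |\<phi>. antimono_on {0..} \<phi> \<and> (\<forall>s\<ge>0. \<phi> s \<le> omega g x s)}"
    using assms(2) by (intro bdd_aboveI[of _ "omega g x t"]) auto
  ultimately have "running_min t \<le> omega_star g x t"
    unfolding omega_star_def by (rule cSup_upper)
  moreover have "omega g x s \<le> running_min t"
    unfolding running_min_def using assms(2,3) min by (intro cINF_greatest) auto
  ultimately show ?thesis by linarith
qed

lemma dyadic_cover:
  fixes t :: real
  assumes "0 < t" "t < 1"
  obtains k where "(1/2)^(k+1) \<le> t" "t < (1/2)^k"
proof -
  obtain n where "1 / t < 2^n"
    using real_arch_pow[of 2 "1 / t"] by auto
  then have "(1/2::real)^n < t"
    using assms by (simp add: field_simps power_one_over)
  moreover have "(1/2::real)^(n+1) \<le> (1/2)^n"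
    by (intro power_decreasing) auto
  ultimately have "\<exists>k. (1/2::real)^(k+1) \<le> t"
    by (metis order.trans less_imp_le)
  define k where "k = (LEAST k. (1/2::real)^(k+1) \<le> t)"
  have "(1/2)^(k+1) \<le> t"
    unfolding k_def by (rule LeastI_ex) fact
  moreover have "t < (1/2)^k"
  proof (cases k)
    case (Suc j)
    then show ?thesis
      using not_less_Least[of j "\<lambda>k. (1/2::real)^(k+1) \<le> t"] by (simp add: k_def not_le)
  qed (use assms in simp)
  ultimately show ?thesis by (rule that)
qed

lemma dyadic_minimisers:
  fixes D :: "real \<Rightarrow> real"
  assumes "continuous_on UNIV D" "D 0 = 0"
  obtains s where "\<And>k. s k \<in> {0..(1/2)^k}"
    and "\<And>k y. y \<in> {0..(1/2)^k} \<Longrightarrow> D (s k) \<le> D y"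
    and "\<And>k. D (s k) \<le> 0"
    and "\<And>j k. j \<le> k \<Longrightarrow> D (s j) \<le> D (s k)"
    and "\<And>k. D (s k) < 0 \<Longrightarrow> 0 < s k"
proof -
  have "\<exists>s\<in>{0..(1/2::real)^k}. \<forall>y\<in>{0..(1/2)^k}. D s \<le> D y" for k
    using continuous_on_subset[OF assms(1), of "{0..(1/2)^k}"] by (intro continuous_attains_inf) auto
  then have "\<forall>k. \<exists>s. s \<in> {0..(1/2::real)^k} \<and> (\<forall>y\<in>{0..(1/2)^k}. D s \<le> D y)"
    by blast
  then obtain s where s: "\<And>k. s k \<in> {0..(1/2)^k}"
    and s_min: "\<And>k y. y \<in> {0..(1/2)^k} \<Longrightarrow> D (s k) \<le> D y"
    by (metis choice)
  moreover have "D (s k) \<le> 0" for k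
    using s_min[of 0 k] assms(2) by simp
  moreover have "D (s j) \<le> D (s k)" if "j \<le> k" for j k
  proof -
    have "(1/2::real)^k \<le> (1/2)^j" using that by (intro power_decreasing) auto
    then have "s k \<in> {0..(1/2)^j}" using s[of k] by (meson atLeastAtMost_iff order_trans)
    then show ?thesis by (rule s_min)
  qed
  moreover have "0 < s k" if "D (s k) < 0" for k
    using that s[of k] assms(2) by (cases "s k = 0") auto
  ultimately show ?thesis by (rule that)
qed

lemma dyadic_block_sum_le:
  fixes s a :: "nat \<Rightarrow> real"
  assumes "j < j'" "0 < s j"
    and s_le: "\<And>k. s k \<le> (1/2)^k"
    and a_nonneg: "\<And>k. 0 \<le> a k" and a_antimono: "\<And>k. j \<le> k \<Longrightarrow> a k \<le> a j"
    and s_large: "\<And>k. j \<le> k \<Longrightarrow> k < j' \<Longrightarrow> s j / 2 < s k"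
  shows "(\<Sum>k\<in>{j..<j'}. 2^k * a k) \<le> 4 * (a j / s j)"
proof -
  have geometric: "(\<Sum>k<n. (2::real)^k) = 2^n - 1" for n
    by (induction n) auto
  have "(2::real)^(j' - 1) * (s j / 2) < 2^(j' - 1) * s (j' - 1)"
    using s_large[of "j' - 1"] assms(1) by simp
  also have "\<dots> \<le> 2^(j' - 1) * (1/2)^(j' - 1)"
    using s_le by (intro mult_left_mono) auto
  also have "\<dots> = 1"
    by (simp add: power_one_over)
  finally have "(2::real)^j' \<le> 4 / s j"
    using assms(1,2) by (cases j') (auto simp: field_simps)
  have "(\<Sum>k\<in>{j..<j'}. 2^k * a k) \<le> (\<Sum>k\<in>{j..<j'}. 2^k * a j)"
    using a_antimono by (intro sum_mono mult_left_mono) auto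
  also have "\<dots> \<le> (\<Sum>k<j'. 2^k) * a j"
    using a_nonneg by (auto simp: sum_distrib_right intro!: sum_mono2)
  also have "\<dots> \<le> (4 / s j) * a j"
    using \<open>2^j' \<le> 4 / s j\<close> a_nonneg by (intro mult_right_mono) (auto simp: geometric)
  finally show ?thesis by simp
qed

lemma first_halving_index:
  fixes s :: "nat \<Rightarrow> real"
  assumes s_le: "\<And>k. s k \<le> (1/2)^k" and "0 < s j"
  obtains j' where "j < j'" "s j' \<le> s j / 2" "\<And>k. j \<le> k \<Longrightarrow> k < j' \<Longrightarrow> s j / 2 < s k"
proof -
  obtain n where "2 / s j < 2^n"
    using real_arch_pow[of 2 "2 / s j"] by auto
  then have "(1/2::real)^n < s j / 2"
    using \<open>0 < s j\<close> by (simp add: field_simps power_one_over)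
  moreover have "(1/2::real)^(max n (Suc j)) \<le> (1/2)^n"
    by (intro power_decreasing) auto
  ultimately have "s (max n (Suc j)) \<le> s j / 2"
    using s_le[of "max n (Suc j)"] by linarith
  then have "\<exists>k. j < k \<and> s k \<le> s j / 2" by (intro exI[of _ "max n (Suc j)"]) auto
  define j' where "j' = (LEAST k. j < k \<and> s k \<le> s j / 2)"
  have "j < j'" "s j' \<le> s j / 2"
    using LeastI_ex[OF \<open>\<exists>k. j < k \<and> s k \<le> s j / 2\<close>] by (simp_all add: j'_def)
  moreover have "s j / 2 < s k" if "j \<le> k" "k < j'" for k
  proof (cases "k = j")
    case False
    then have "\<not> (j < k \<and> s k \<le> s j / 2)"
      using not_less_Least[of k "\<lambda>k. j < k \<and> s k \<le> s j / 2"] that by (simp add: j'_def)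
    then show ?thesis using that False by simp
  qed (use \<open>0 < s j\<close> in simp)
  ultimately show ?thesis by (rule that)
qed

lemma dyadic_sum_le:
  fixes s a :: "nat \<Rightarrow> real" and \<Phi> :: "real \<Rightarrow> real"
  assumes s_nonneg: "\<And>k. 0 \<le> s k" and s_le: "\<And>k. s k \<le> (1/2)^k"
    and s_pos: "\<And>k. 0 < a k \<Longrightarrow> 0 < s k"
    and a_nonneg: "\<And>k. 0 \<le> a k" and a_antimono: "\<And>j k. j \<le> k \<Longrightarrow> a k \<le> a j"
    and \<Phi>_lower: "\<And>k. B \<le> \<Phi> (s k)"
    and increment: "\<And>i k. 0 < a k \<Longrightarrow> s k \<le> s i / 2 \<Longrightarrow> a k / (3 * s k) \<le> \<Phi> (s i) - \<Phi> (s k)"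
  shows "(\<Sum>k\<in>{j..<N}. 2^k * a k) \<le> 4 * (a j / s j) + 12 * (\<Phi> (s j) - B)"
proof (induction "N - j" arbitrary: j rule: less_induct)
  \<comment> \<open>Jump from \<open>j\<close> to the first index \<open>j'\<close> at which \<open>s\<close> has halved: the block \<open>[j, j')\<close>
    costs at most \<open>4 a j / s j\<close>, and \<open>4 a j' / s j'\<close> is paid for by the increment of \<open>\<Phi>\<close>.\<close>
  case less
  have tail_zero: "(\<Sum>k\<in>{i..<N}. 2^k * a k) = 0" if "a i = 0" for i
  proof (intro sum.neutral ballI)
    fix k assume "k \<in> {i..<N}"
    then have "a k = 0" using that a_antimono[of i k] a_nonneg[of k] by simp
    then show "2^k * a k = 0" by simp
  qed
  show ?case
  proof (cases "a j = 0")
    case True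
    then show ?thesis using tail_zero \<Phi>_lower[of j] by simp
  next
    case False
    then have "0 < s j" using a_nonneg s_pos by (simp add: order_less_le)
    then obtain j' where j': "j < j'" "s j' \<le> s j / 2" and "\<And>k. j \<le> k \<Longrightarrow> k < j' \<Longrightarrow> s j / 2 < s k"
      using first_halving_index[OF s_le] by blast
    then have block: "(\<Sum>k\<in>{j..<j'}. 2^k * a k) \<le> 4 * (a j / s j)"
      using j' \<open>0 < s j\<close> by (intro dyadic_block_sum_le s_le a_nonneg a_antimono)
    show ?thesis
    proof (cases "N \<le> j'")
      case True
      then have "(\<Sum>k\<in>{j..<N}. 2^k * a k) \<le> (\<Sum>k\<in>{j..<j'}. 2^k * a k)"
        using a_nonneg by (intro sum_mono2) auto
      then show ?thesis using block \<Phi>_lower[of j] by simp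
    next
      case False
      then have "j' < N" by simp
      have tail: "(\<Sum>k\<in>{j'..<N}. 2^k * a k) \<le> 12 * (\<Phi> (s j) - B)"
      proof (cases "a j' = 0")
        case True
        then show ?thesis using tail_zero \<Phi>_lower[of j] by simp
      next
        case False
        then have "4 * (a j' / s j') \<le> 12 * (\<Phi> (s j) - \<Phi> (s j'))"
          using increment[of j' j] j' a_nonneg[of j'] by simp
        moreover have "(\<Sum>k\<in>{j'..<N}. 2^k * a k) \<le> 4 * (a j' / s j') + 12 * (\<Phi> (s j') - B)"
          using less.hyps[of j'] j' \<open>j' < N\<close> by simp
        ultimately show ?thesis by simp
      qed
      have "(\<Sum>k\<in>{j..<N}. 2^k * a k) = (\<Sum>k\<in>{j..<j'}. 2^k * a k) + (\<Sum>k\<in>{j'..<N}. 2^k * a k)"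
        using j' \<open>j' < N\<close> by (simp add: sum.atLeastLessThan_concat)
      then show ?thesis using block tail by simp
    qed
  qed
qed

lemma nn_integral_dyadic_step:
  fixes a :: real
  assumes "0 \<le> a"
  shows "(\<integral>\<^sup>+ t. ennreal (4^(k+1) * a) * indicator {(1/2::real)^(k+1)..<(1/2)^k} t \<partial>lborel)
           = ennreal (2^(k+1) * a)"
proof -
  have le: "(1/2::real)^(k+1) \<le> (1/2)^k" by (intro power_decreasing) auto
  have "(\<integral>\<^sup>+ t. ennreal (4^(k+1) * a) * indicator {(1/2::real)^(k+1)..<(1/2)^k} t \<partial>lborel)
        = ennreal (4^(k+1) * a) * ennreal ((1/2)^k - (1/2)^(k+1))"
    using le by (simp add: nn_integral_cmult_indicator)
  also have "\<dots> = ennreal (4^(k+1) * a * ((1/2)^k - (1/2)^(k+1)))"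
    using assms le by (intro ennreal_mult[symmetric]) auto
  also have "4^(k+1) * a * ((1/2)^k - (1/2)^(k+1)) = 2^(k+1) * a"
    by (simp add: power_one_over field_simps flip: power_mult_distrib)
  finally show ?thesis .
qed

lemma nn_integral_div_square_dyadic_le:
  fixes f :: "real \<Rightarrow> real" and a :: "nat \<Rightarrow> real"
  assumes a_nonneg: "\<And>k. 0 \<le> a k"
    and f_le: "\<And>k t. (1/2)^(k+1) \<le> t \<Longrightarrow> t < (1/2)^k \<Longrightarrow> f t \<le> a k"
    and partial_sums: "\<And>n. (\<Sum>k<n. 2^k * a k) \<le> C"
  shows "(\<integral>\<^sup>+ t \<in> {0<..<1}. ennreal (f t / t\<^sup>2) \<partial>lborel) \<le> ennreal (2 * C)"
proof -
  define A where "A k = {(1/2::real)^(k+1) ..< (1/2)^k}" for k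
  define c where "c k = 4^(k+1) * a k" for k
  have pointwise: "ennreal (f t / t\<^sup>2) * indicator {0<..<1} t \<le> (\<Sum>k. ennreal (c k) * indicator (A k) t)"
    for t
  proof (cases "t \<in> {0<..<1}")
    case True
    then obtain k where k: "(1/2)^(k+1) \<le> t" "t < (1/2)^k"
      using dyadic_cover by auto
    have "f t / t\<^sup>2 \<le> a k / t\<^sup>2"
      using f_le[OF k] by (simp add: divide_right_mono)
    also have "\<dots> \<le> a k / ((1/2)^(k+1))\<^sup>2"
      using a_nonneg[of k] k by (intro divide_left_mono power_mono) auto
    also have "\<dots> = c k"
      unfolding c_def
      by (metis power_one_over power_mult_distrib power2_eq_square num_double numeral_times_numeral
          divide_divide_eq_right div_by_1 mult.commute)
    finally have "ennreal (f t / t\<^sup>2) * indicator {0<..<1} t \<le> ennreal (c k) * indicator (A k) t"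
      using True k by (simp add: A_def ennreal_leI)
    also have "\<dots> \<le> (\<Sum>k. ennreal (c k) * indicator (A k) t)"
      using sum_le_suminf[OF summableI, of "{k}"] by simp
    finally show ?thesis .
  qed simp
  have "(\<integral>\<^sup>+ t \<in> {0<..<1}. ennreal (f t / t\<^sup>2) \<partial>lborel) \<le> (\<integral>\<^sup>+ t. (\<Sum>k. ennreal (c k) * indicator (A k) t) \<partial>lborel)"
    by (rule nn_integral_mono) (rule pointwise)
  also have "\<dots> = (\<Sum>k. \<integral>\<^sup>+ t. ennreal (c k) * indicator (A k) t \<partial>lborel)"
    by (rule nn_integral_suminf) (simp add: A_def)
  also have "\<dots> = (\<Sum>k. ennreal (2^(k+1) * a k))"
    unfolding A_def c_def by (intro suminf_cong nn_integral_dyadic_step a_nonneg)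
  also have "\<dots> \<le> ennreal (2 * C)"
  proof (rule suminf_le_const[OF summableI])
    fix n
    have "(\<Sum>k<n. ennreal (2^(k+1) * a k)) = ennreal (2 * (\<Sum>k<n. 2^k * a k))"
      using a_nonneg by (simp add: sum_ennreal sum_distrib_left mult.assoc)
    then show "(\<Sum>k<n. ennreal (2^(k+1) * a k)) \<le> ennreal (2 * C)"
      using partial_sums[of n] by (simp add: ennreal_leI)
  qed
  finally show ?thesis .
qed

lemma locally_lipschitz_imp_continuous:
  assumes "locally_lipschitz g"
  shows "continuous_on UNIV g"
proof (rule continuous_at_imp_continuous_on, intro ballI)
  fix y :: real
  obtain U L where "open U" "y \<in> U" "L-lipschitz_on U g"
    using assms unfolding locally_lipschitz_def by blast
  then show "isCont g y"
    using lipschitz_on_continuous_on continuous_on_eq_continuous_at by blast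
qed

lemma locally_lipschitz_imp_lipschitz_on_compact:
  assumes "locally_lipschitz g" "compact K"
  obtains L where "L-lipschitz_on K g"
proof -
  have "local_lipschitz {0::real} K (\<lambda>_. g)"
    unfolding local_lipschitz_def
  proof (intro ballI)
    fix y t assume "y \<in> K"
    obtain U L where U: "open U" "y \<in> U" "L-lipschitz_on U g"
      using assms(1) unfolding locally_lipschitz_def by blast
    then obtain e where e: "e > 0" "cball y e \<subseteq> U"
      using open_contains_cball by blast
    then have "L-lipschitz_on (cball y e \<inter> K) g"
      using lipschitz_on_subset[OF U(3)] by blast
    then show "\<exists>u>0. \<exists>L. \<forall>t\<in>cball t u \<inter> {0}. L-lipschitz_on (cball y u \<inter> K) g"
      using e(1) by blast
  qed
  then show ?thesis
    using local_lipschitz_compact_implies_lipschitz[OF _ assms(2) compact_sing[of "0::real"]] that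
    by auto
qed

lemma separately_convex_bounded_above_on_square:
  assumes "separately_convex h"
  obtains M where "\<And>s u. s \<in> {c..d} \<Longrightarrow> u \<in> {c..d} \<Longrightarrow> h (s, u) \<le> M"
proof
  fix s u :: real assume "s \<in> {c..d}" "u \<in> {c..d}"
  have edge: "f v \<le> max (f c) (f d)" if "convex_on UNIV f" "v \<in> {c..d}" for f :: "real \<Rightarrow> real" and v
    using convex_on_le_max[OF convex_on_subset[OF that(1)] that(2)] by auto
  have "h (s, u) \<le> max (h (c, u)) (h (d, u))"
    using assms \<open>s \<in> {c..d}\<close> by (intro edge[of "\<lambda>s. h (s, u)"]) (auto simp: separately_convex_def)
  also have "\<dots> \<le> max (max (h (c, c)) (h (c, d))) (max (h (d, c)) (h (d, d)))"
    using assms \<open>u \<in> {c..d}\<close> edge[of "\<lambda>u. h (c, u)" u] edge[of "\<lambda>u. h (d, u)" u]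
    by (auto simp: separately_convex_def)
  finally show "h (s, u) \<le> max (max (h (c, c)) (h (c, d))) (max (h (d, c)) (h (d, d)))" .
qed

locale separately_convex_extension =
  fixes g :: "real \<Rightarrow> real" and h :: "real \<times> real \<Rightarrow> real"
  assumes separately_convex: "separately_convex h"
    and diagonal: "\<And>t. g t = h (t, t)"
begin

lemma convex_row: "convex_on UNIV (\<lambda>s. h (s, u))"
  and convex_column: "convex_on UNIV (\<lambda>u. h (s, u))"
  using separately_convex by (auto simp: separately_convex_def)

definition cross_difference :: "real \<Rightarrow> real \<Rightarrow> real" where
  "cross_difference x r = h (x + r, x - r) + h (x - r, x + r) - 2 * g x"

lemma neg_omega_le_cross_difference: "- omega g x r \<le> cross_difference x r"
proof -
  have "2 * h (x, x) \<le> h (x - r, x) + h (x + r, x)"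
    using convex_on_midpoint[OF convex_row] .
  moreover have "2 * h (x + r, x) \<le> h (x + r, x - r) + h (x + r, x + r)"
    using convex_on_midpoint[OF convex_column] .
  moreover have "2 * h (x - r, x) \<le> h (x - r, x - r) + h (x - r, x + r)"
    using convex_on_midpoint[OF convex_column] .
  ultimately show ?thesis by (simp add: omega_def cross_difference_def diagonal)
qed

lemma cross_difference_le:
  assumes r: "0 \<le> r" "r \<le> 1" and "0 \<le> B"
    and right: "h (x + 1, x - r) - g (x - r) \<le> B"
    and left: "h (x - 1, x + r) - g (x + r) \<le> B"
  shows "cross_difference x r \<le> omega g x r + 4 * r * B"
proof -
  have damped: "y \<le> 2 * r * B" if "(1 + r) * y \<le> 2 * r * z" "z \<le> B" for y z
  proof -
    have "2 * r * z \<le> 2 * r * B" using that r by (intro mult_left_mono) auto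
    moreover have "0 \<le> 2 * r * B" using r \<open>0 \<le> B\<close> by simp
    moreover have "y \<le> 0 \<or> 0 \<le> r * y" using r by (cases "y \<le> 0") auto
    ultimately show ?thesis using that(1) by (simp add: algebra_simps) linarith
  qed
  have "(1 + r) * h (x + r, x - r) \<le> (1 - r) * h (x - r, x - r) + 2 * r * h (x + 1, x - r)"
    using convex_on_three_point[OF convex_row, of "x - r" "x + 1" "x + r"] r by (simp add: algebra_simps)
  then have "h (x + r, x - r) - g (x - r) \<le> 2 * r * B"
    using right by (intro damped[of _ "h (x + 1, x - r) - g (x - r)"]) (simp_all add: diagonal algebra_simps)
  moreover have "(1 + r) * h (x - r, x + r) \<le> 2 * r * h (x - 1, x + r) + (1 - r) * h (x + r, x + r)"
    using convex_on_three_point[OF convex_row, of "x - 1" "x + r" "x - r"] r by (simp add: algebra_simps)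
  then have "h (x - r, x + r) - g (x + r) \<le> 2 * r * B"
    using left by (intro damped[of _ "h (x - 1, x + r) - g (x + r)"]) (simp_all add: diagonal algebra_simps)
  ultimately show ?thesis by (simp add: cross_difference_def omega_def)
qed

lemma cross_difference_chord:
  assumes "0 < r" "r < \<rho>"
  shows "(\<rho> - r) * (\<rho> * - omega g x r + r * - omega g x \<rho>)
           \<le> (\<rho> + r) * (r * cross_difference x \<rho> - \<rho> * cross_difference x r)"
proof -
  \<comment> \<open>Weighting the two row estimates by \<open>\<rho>\<close> and the two column estimates by \<open>r\<close> cancels
    the off-diagonal values \<open>h (x \<plusminus> \<rho>, x \<mp> r)\<close>.\<close>
  have 1: "(\<rho> + r) * h (x + r, x - r) \<le> (\<rho> - r) * g (x - r) + 2 * r * h (x + \<rho>, x - r)"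
    using convex_on_three_point[OF convex_row, of "x - r" "x + \<rho>" "x + r"] assms
    by (simp add: diagonal algebra_simps)
  have 2: "2 * \<rho> * h (x + \<rho>, x - r) \<le> (\<rho> + r) * h (x + \<rho>, x - \<rho>) + (\<rho> - r) * g (x + \<rho>)"
    using convex_on_three_point[OF convex_column, of "x - \<rho>" "x + \<rho>" "x - r"] assms
    by (simp add: diagonal algebra_simps)
  have 3: "(\<rho> + r) * h (x - r, x + r) \<le> 2 * r * h (x - \<rho>, x + r) + (\<rho> - r) * g (x + r)"
    using convex_on_three_point[OF convex_row, of "x - \<rho>" "x + r" "x - r"] assms
    by (simp add: diagonal algebra_simps)
  have 4: "2 * \<rho> * h (x - \<rho>, x + r) \<le> (\<rho> - r) * g (x - \<rho>) + (\<rho> + r) * h (x - \<rho>, x + \<rho>)"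
    using convex_on_three_point[OF convex_column, of "x - \<rho>" "x + \<rho>" "x + r"] assms
    by (simp add: diagonal algebra_simps)
  have "0 \<le> \<rho>" using assms by simp
  from mult_left_mono[OF 1 this] mult_left_mono[OF 2, of r] mult_left_mono[OF 3 this]
    mult_left_mono[OF 4, of r] assms
  show ?thesis by (simp add: cross_difference_def omega_def algebra_simps)
qed

lemma cross_quotient_increment:
  assumes r: "0 < r" "2 * r \<le> \<rho>" and "omega g x r \<le> 0" "omega g x \<rho> \<le> 0"
  shows "- omega g x r / (3 * r) \<le> cross_difference x \<rho> / \<rho> - cross_difference x r / r"
proof -
  define \<delta> where "\<delta> = r * cross_difference x \<rho> - \<rho> * cross_difference x r"
  have "(\<rho> + r) * (\<rho> * - omega g x r / 3) = ((\<rho> + r) / 3) * (\<rho> * - omega g x r)"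
    by simp
  also have "\<dots> \<le> (\<rho> - r) * (\<rho> * - omega g x r)"
    using assms by (intro mult_right_mono) (auto simp: mult_nonneg_nonpos)
  also have "\<dots> \<le> (\<rho> - r) * (\<rho> * - omega g x r + r * - omega g x \<rho>)"
    using assms by (intro mult_left_mono) (auto simp: mult_nonneg_nonpos)
  also have "\<dots> \<le> (\<rho> + r) * \<delta>"
    unfolding \<delta>_def using r by (intro cross_difference_chord) auto
  finally have "\<rho> * - omega g x r / 3 \<le> \<delta>"
    using r by (simp only: mult_le_cancel_left_pos)
  then have "(\<rho> * - omega g x r / 3) / (r * \<rho>) \<le> \<delta> / (r * \<rho>)"
    using r by (intro divide_right_mono) auto
  then show ?thesis
    using r by (simp add: \<delta>_def field_simps)
qed

lemma cross_quotient_ge: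
  assumes "L-lipschitz_on {x - 1..x + 1} g" "r \<in> {0..1}"
  shows "- 2 * L \<le> cross_difference x r / r"
proof (cases "r = 0")
  case False
  have "\<bar>omega g x r\<bar> \<le> 2 * L * r"
    using omega_abs_le_lipschitz[OF assms(1), of x r] assms(2) by auto
  then have "- 2 * L * r \<le> cross_difference x r"
    using neg_omega_le_cross_difference[of x r] by linarith
  then show ?thesis using assms(2) False by (simp add: field_simps)
qed (use lipschitz_on_nonneg[OF assms(1)] in simp)

lemma cross_quotient_le:
  assumes "L-lipschitz_on {x - 1..x + 1} g" "r \<in> {0..1}" "0 \<le> B"
    and "h (x + 1, x - r) - g (x - r) \<le> B" "h (x - 1, x + r) - g (x + r) \<le> B"
  shows "cross_difference x r / r \<le> 2 * L + 4 * B"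
proof (cases "r = 0")
  case False
  have "\<bar>omega g x r\<bar> \<le> 2 * L * r"
    using omega_abs_le_lipschitz[OF assms(1), of x r] assms(2) by auto
  then have "cross_difference x r \<le> r * (2 * L + 4 * B)"
    using cross_difference_le[of r B x] assms(2-5) by (simp add: algebra_simps)
  then show ?thesis using assms(2) False by (simp add: field_simps)
qed (use lipschitz_on_nonneg[OF assms(1)] assms(3) in simp)

lemma nn_integral_neg_omega_star_le:
  assumes g_cont: "continuous_on UNIV g" and lip: "L-lipschitz_on {x - 1..x + 1} g" and "0 \<le> B"
    and right: "\<And>r. r \<in> {0..1} \<Longrightarrow> h (x + 1, x - r) - g (x - r) \<le> B"
    and left: "\<And>r. r \<in> {0..1} \<Longrightarrow> h (x - 1, x + r) - g (x + r) \<le> B"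
  shows "(\<integral>\<^sup>+ t \<in> {0<..<1}. ennreal (- omega_star g x t / t\<^sup>2) \<partial>lborel) \<le> ennreal (2 * (56 * L + 48 * B))"
proof -
  define \<Phi> where "\<Phi> r = cross_difference x r / r" for r
  have omega_cont: "continuous_on UNIV (omega g x)"
    unfolding omega_def by (intro continuous_intros continuous_on_compose2[OF g_cont] subset_UNIV)
  obtain s where s: "\<And>k. s k \<in> {0..(1/2)^k}"
    and s_min: "\<And>k y. y \<in> {0..(1/2)^k} \<Longrightarrow> omega g x (s k) \<le> omega g x y"
    and omega_nonpos: "\<And>k. omega g x (s k) \<le> 0"
    and omega_mono: "\<And>j k. j \<le> k \<Longrightarrow> omega g x (s j) \<le> omega g x (s k)"
    and s_pos: "\<And>k. omega g x (s k) < 0 \<Longrightarrow> 0 < s k"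
    using dyadic_minimisers[OF omega_cont] by (auto simp: omega_def)
  define a where "a k = - omega g x (s k)" for k
  have s_unit: "s k \<in> {0..1}" for k
    using s[of k] power_le_one[of "1/2::real" k] by auto
  have sum_le: "(\<Sum>k<n. 2^k * a k) \<le> 4 * (a 0 / s 0) + 12 * (\<Phi> (s 0) - - 2 * L)" for n
    unfolding atLeast0LessThan[symmetric]
  proof (rule dyadic_sum_le)
    show "a k / (3 * s k) \<le> \<Phi> (s i) - \<Phi> (s k)" if "0 < a k" "s k \<le> s i / 2" for i k
      using cross_quotient_increment[of "s k" "s i" x] s_pos[of k] omega_nonpos[of i] that
      by (simp add: a_def \<Phi>_def)
  qed (use s s_pos omega_nonpos omega_mono s_unit cross_quotient_ge[OF lip] in \<open>auto simp: a_def \<Phi>_def\<close>)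
  have first_le: "a 0 / s 0 \<le> 2 * L"
  proof (cases "s 0 = 0")
    case False
    then have "0 < s 0" using s_unit[of 0] by simp
    moreover have "a 0 \<le> 2 * L * s 0"
      using omega_abs_le_lipschitz[OF lip, of x "s 0"] s_unit[of 0] by (auto simp: a_def abs_le_iff)
    ultimately show ?thesis by (simp add: pos_divide_le_eq)
  qed (use lipschitz_on_nonneg[OF lip] in simp)
  have "\<Phi> (s 0) \<le> 2 * L + 4 * B"
    unfolding \<Phi>_def using s_unit[of 0] by (intro cross_quotient_le lip \<open>0 \<le> B\<close> right left)
  then have partial_sums: "(\<Sum>k<n. 2^k * a k) \<le> 56 * L + 48 * B" for n
    using sum_le[of n] first_le by simp
  have "- omega_star g x t \<le> a k" if "(1/2)^(k+1) \<le> t" "t < (1/2)^k" for k t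
  proof -
    have "0 \<le> t" using that(1) zero_le_power[of "1/2::real" "k+1"] by linarith
    then show ?thesis
      using omega_le_omega_star[OF g_cont, of t "(1/2)^k" "s k" x] s s_min that by (simp add: a_def)
  qed
  then show ?thesis
    using nn_integral_div_square_dyadic_le[of a, OF _ _ partial_sums, of "\<lambda>t. - omega_star g x t"]
      omega_nonpos by (simp add: a_def)
qed

lemma nn_integral_neg_omega_star_uniform_le:
  assumes "locally_lipschitz g"
  obtains C where "0 \<le> C"
    and "\<And>x. \<bar>x\<bar> \<le> R \<Longrightarrow> (\<integral>\<^sup>+ t \<in> {0<..<1}. ennreal (- omega_star g x t / t\<^sup>2) \<partial>lborel) \<le> ennreal C"
proof -
  define K where "K = {- R - 1..R + 1}"
  have g_cont: "continuous_on UNIV g"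
    using assms by (rule locally_lipschitz_imp_continuous)
  obtain L where L: "L-lipschitz_on K g"
    using locally_lipschitz_imp_lipschitz_on_compact[OF assms] unfolding K_def by blast
  obtain M where M: "\<And>s u. s \<in> K \<Longrightarrow> u \<in> K \<Longrightarrow> h (s, u) \<le> M"
    using separately_convex_bounded_above_on_square[OF separately_convex] unfolding K_def by blast
  obtain m where m: "\<And>p. p \<in> K \<Longrightarrow> m \<le> g p"
    using continuous_attains_inf[OF compact_Icc _ continuous_on_subset[OF g_cont]] unfolding K_def
    by (metis atLeastAtMost_iff empty_iff subset_UNIV)
  define B where "B = max 0 (M - m)"
  have B: "h (s, u) - g u \<le> B" if "s \<in> K" "u \<in> K" for s u
    using M[OF that] m[OF that(2)] max.cobounded2[of "M - m" 0] unfolding B_def by linarith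
  show ?thesis
  proof
    show "0 \<le> 2 * (56 * L + 48 * B)"
      using lipschitz_on_nonneg[OF L] by (simp add: B_def)
  next
    fix x :: real assume "\<bar>x\<bar> \<le> R"
    then have near: "x + r \<in> K" if "\<bar>r\<bar> \<le> 1" for r
      using that by (auto simp: K_def)
    have "{x - 1..x + 1} \<subseteq> K"
      using near[of "_ - x"] by (auto simp: abs_le_iff)
    then show "(\<integral>\<^sup>+ t \<in> {0<..<1}. ennreal (- omega_star g x t / t\<^sup>2) \<partial>lborel) \<le> ennreal (2 * (56 * L + 48 * B))"
      using B[OF near[of 1] near[of "- _"]] B[OF near[of "- 1"] near[of _]]
      by (intro nn_integral_neg_omega_star_le g_cont lipschitz_on_subset[OF L]) (auto simp: B_def)
  qed
qed

end

theorem theorem4p2: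
  fixes g :: "real \<Rightarrow> real" and h :: "real \<times> real \<Rightarrow> real" and I :: "real set"
  assumes "locally_lipschitz g"
    and "separately_convex h"
    and "\<forall>t. g t = h (t, t)"
    and "is_interval I" and "bounded I"
  shows "\<exists>C::real. \<forall>x\<in>I.
           (\<integral>\<^sup>+ t \<in> {0<..<1}. ennreal (- omega_star g x t / t\<^sup>2) \<partial>lborel) < ennreal C"
proof -
  interpret separately_convex_extension g h
    using assms(2,3) by unfold_locales auto
  obtain R where R: "\<And>x. x \<in> I \<Longrightarrow> \<bar>x\<bar> \<le> R"
    using assms(5) by (auto simp: bounded_iff)
  obtain C where "0 \<le> C"
    and C: "\<And>x. \<bar>x\<bar> \<le> R \<Longrightarrow> (\<integral>\<^sup>+ t \<in> {0<..<1}. ennreal (- omega_star g x t / t\<^sup>2) \<partial>lborel) \<le> ennreal C"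
    using nn_integral_neg_omega_star_uniform_le[OF assms(1)] by blast
  have "ennreal C < ennreal (C + 1)"
    using \<open>0 \<le> C\<close> by (simp add: ennreal_lessI)
  then show ?thesis
    using C R by (meson le_less_trans)
qed

end
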